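(* Let $q\in(0,1]$. Consider the parametric convex semi-infinite problem described in the context, and let $(\bar c,\bar b)\in\mathbb{R}^n\times\mathcal{C}(T,\mathbb{R})$ and $\bar x\in\mathcal{S}(\bar c,\bar b)$. Assume that $P(\bar c,\bar b)$ satisfies the Slater condition. Consider the statements: (i) $\mathcal{S}$ is $q$-order calm at $((\bar c,\bar b),\bar x)$; (ii) $\mathcal{S}_{\bar c}$ is $q$-order calm at $(\bar b,\bar x)$; (iii) $\mathcal{L}$ is $q$-order calm at $((f(\bar x)+\langle\bar c,\bar x\rangle,\bar b),\bar x)$; (iv) $\bar f$ admits a $q$-order local error bound at $\bar x$, i.e. there exist $\tau>0$, $\delta>0$ with $\tau\, d(x,[\bar f\le 0])\le [\max\{\bar f(x),0\}]^q$ for all $x$ with $\|x-\bar x\|<\delta$. Then (iii) $\Leftrightarrow$ (iv) $\Rightarrow$ (i) $\Rightarrow$ (ii). In addition, if $f$ and all $g_t$ ($t\in T$) are linear, then (i) $\Leftrightarrow$ (ii) $\Leftrightarrow$ (iii) $\Leftrightarrow$ (iv).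
   Context: Setting: $T$ is a compact subset of a metric space $Z$ with $T\neq Z$; $f:\mathbb{R}^n\to\mathbb{R}$ and $g_t:\mathbb{R}^n\to\mathbb{R}$ ($t\in T$) are convex, and $(t,x)\mapsto g_t(x)$ is continuous on $T\times\mathbb{R}^n$. $\mathcal{C}(T,\mathbb{R})$ is the space of continuous functions $b:T\to\mathbb{R}$, $t\mapsto b_t$, with $\|b\|_\infty=\max_{t\in T}|b_t|$. For $(c,b)\in\mathbb{R}^n\times\mathcal{C}(T,\mathbb{R})$ the problem $P(c,b)$ is: minimize $f(x)+\langle c,x\rangle$ subject to $g_t(x)\le b_t$ for all $t\in T$. The parameter space carries the norm $\|(c,b)\|=\max\{\|c\|,\|b\|_\infty\}$ ($\|\cdot\|$ Euclidean on $\mathbb{R}^n$). $\mathcal{S}(c,b)$ is the set of optimal solutions of $P(c,b)$; $\mathcal{S}_c(b):=\mathcal{S}(c,b)$ for fixed $c$; $\mathcal{F}(b):=\{x: g_t(x)\le b_t,\ t\in T\}$. $P(c,b)$ satisfies the Slater condition if there is $\hat x$ with $g_t(\hat x)<b_t$ for all $t\in T$. The level set mapping $\mathcal{L}:\mathbb{R}\times\mathcal{C}(T,\mathbb{R})\rightrightarrows\mathbb{R}^n$ is $\mathcal{L}(\alpha,b)=\{x: f(x)+\langle\bar c,x\rangle\le\alpha,\ g_t(x)\le b_t,\ t\in T\}$, with $\mathbb{R}\times\mathcal{C}(T,\mathbb{R})$ normed by $\max\{|\alpha|,\|b\|_\infty\}$. The supremum function is $\bar f(x):=\sup\{f(x)-f(\bar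 x)+\langle\bar c,x-\bar x\rangle;\ g_t(x)-\bar b_t,\ t\in T\}$, and $[\bar f\le0]=\{x:\bar f(x)\le0\}$. For a set-valued map $S:Y\rightrightarrows X$ between metric spaces, $(\bar y,\bar x)\in\operatorname{gph}S$ and $q>0$, $S$ is $q$-order calm at $(\bar y,\bar x)$ if there exist $\tau>0$ and neighbourhoods $U$ of $\bar x$, $V$ of $\bar y$ such that $\tau\, d(x,S(\bar y))\le d(y,\bar y)^q$ for all $y\in V$ and $x\in S(y)\cap U$. *)

theory Defs
  imports "HOL-Analysis.Analysis"
begin

text \<open>Sup-norm distance on C(T,R); functions are represented as total functions,
  only their values on T matter. The insert 0 makes the empty-T case give 0.\<close>
definition supdist :: "'z set \<Rightarrow> ('z \<Rightarrow> real) \<Rightarrow> ('z \<Rightarrow> real) \<Rightarrow> real" where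
  "supdist T b b' = Sup (insert 0 ((\<lambda>t. \<bar>b t - b' t\<bar>) ` T))"

definition pdist :: "'z set \<Rightarrow> ('a::real_normed_vector \<times> ('z \<Rightarrow> real)) \<Rightarrow> ('a \<times> ('z \<Rightarrow> real)) \<Rightarrow> real" where
  "pdist T p p' = max (norm (fst p - fst p')) (supdist T (snd p) (snd p'))"

definition feas :: "'z set \<Rightarrow> ('z \<Rightarrow> 'a \<Rightarrow> real) \<Rightarrow> ('z \<Rightarrow> real) \<Rightarrow> 'a set" where
  "feas T g b = {x. \<forall>t\<in>T. g t x \<le> b t}"

definition optset :: "'z set \<Rightarrow> ('a::real_inner \<Rightarrow> real) \<Rightarrow> ('z \<Rightarrow> 'a \<Rightarrow> real)
    \<Rightarrow> 'a \<times> ('z \<Rightarrow> real) \<Rightarrow> 'a set" where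
  "optset T f g p = {x \<in> feas T g (snd p). \<forall>y \<in> feas T g (snd p).
      f x + inner (fst p) x \<le> f y + inner (fst p) y}"

definition levelset :: "'z set \<Rightarrow> ('a::real_inner \<Rightarrow> real) \<Rightarrow> ('z \<Rightarrow> 'a \<Rightarrow> real) \<Rightarrow> 'a
    \<Rightarrow> real \<times> ('z \<Rightarrow> real) \<Rightarrow> 'a set" where
  "levelset T f g cbar p = {x \<in> feas T g (snd p). f x + inner cbar x \<le> fst p}"

definition ldist :: "'z set \<Rightarrow> real \<times> ('z \<Rightarrow> real) \<Rightarrow> real \<times> ('z \<Rightarrow> real) \<Rightarrow> real" where
  "ldist T p p' = max \<bar>fst p - fst p'\<bar> (supdist T (snd p) (snd p'))"

definition supfun :: "'z set \<Rightarrow> ('a::real_inner \<Rightarrow> real) \<Rightarrow> ('z \<Rightarrow> 'a \<Rightarrow> real) \<Rightarrow> 'a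
    \<Rightarrow> ('z \<Rightarrow> real) \<Rightarrow> 'a \<Rightarrow> 'a \<Rightarrow> real" where
  "supfun T f g cbar bbar xbar x =
     Sup (insert (f x - f xbar + inner cbar (x - xbar)) ((\<lambda>t. g t x - bbar t) ` T))"

text \<open>q-order calmness of S : Y \<rightrightarrows> X at (ybar,xbar), Y a subset with distance dY,
  X a metric space; neighbourhoods taken as balls.\<close>
definition q_calm :: "('y \<Rightarrow> 'y \<Rightarrow> real) \<Rightarrow> 'y set \<Rightarrow> ('y \<Rightarrow> 'x::metric_space set)
    \<Rightarrow> real \<Rightarrow> 'y \<Rightarrow> 'x \<Rightarrow> bool" where
  "q_calm dY Y S q ybar xbar \<longleftrightarrow>
     (\<exists>\<tau>>0. \<exists>\<delta>>0. \<exists>\<epsilon>>0. \<forall>y\<in>Y. dY y ybar < \<epsilon> \<longrightarrow>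
        (\<forall>x\<in>S y. dist x xbar < \<delta> \<longrightarrow> \<tau> * infdist x (S ybar) \<le> (dY y ybar) powr q))"

end

theory Submission
  imports Defs
begin

text \<open>
  Everything is measured by the supremum function \<open>fbar\<close>: its zero sublevel set is
  \<open>S(cbar, bbar) = L(f xbar + \<langle>cbar, xbar\<rangle>, bbar)\<close>, it is bounded on \<open>L(\<alpha>, b)\<close> by the
  distance from \<open>(\<alpha>, b)\<close> to the reference parameter, and conversely a point with
  \<open>fbar x = r\<close> lies in the level set shifted up by \<open>r\<close>; this gives (iii) \<open>\<longleftrightarrow>\<close> (iv).
  For (iv) \<open>\<longrightarrow>\<close> (i), the segment from \<open>xbar\<close> towards a uniform Slater point provides,
  for data \<open>(c, b)\<close> at distance \<open>d\<close>, a feasible point whose objective value exceeds the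
  optimal one by \<open>O(d)\<close>, so optimal solutions of \<open>P(c, b)\<close> near \<open>xbar\<close> have
  \<open>fbar = O(d)\<close>. (i) \<open>\<longrightarrow>\<close> (ii) is the restriction to \<open>c = cbar\<close>.
  In the linear case a Farkas lemma for the compact set of active gradients, kept away from
  the origin by the Slater point, yields finitely many KKT multipliers; with them a point of
  \<open>L(\<alpha>, b)\<close> is optimal for the right-hand side \<open>max (g\<^sub>t x) (bbar\<^sub>t - K d)\<close>, which is within
  \<open>K d\<close> of \<open>bbar\<close>, and so (ii) \<open>\<longrightarrow>\<close> (iii).
\<close>

lemma continuous_on_compact_pos_bounded_below:
  fixes h :: "'z::metric_space \<Rightarrow> real"
  assumes "compact T" "continuous_on T h" "\<forall>t\<in>T. 0 < h t"
  obtains s where "0 < s" "\<forall>t\<in>T. s \<le> h t"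
proof (cases "T = {}")
  case True
  then show ?thesis using that[of 1] by simp
next
  case False
  then obtain t0 where "t0 \<in> T" "\<forall>t\<in>T. h t0 \<le> h t"
    using continuous_attains_inf[OF assms(1) False assms(2)] by blast
  then show ?thesis using that assms(3) by blast
qed

lemma small_step_stays_nonpos:
  fixes u v :: "'z::metric_space \<Rightarrow> real"
  assumes T: "compact T" and cont: "continuous_on T u" "continuous_on T v"
    and u_nonpos: "\<forall>t\<in>T. u t \<le> 0" and v_neg: "\<forall>t\<in>T. u t = 0 \<longrightarrow> v t < 0"
  obtains \<sigma> where "0 < \<sigma>" "\<forall>t\<in>T. u t + \<sigma> * v t \<le> 0"
proof -
  define T\<^sub>v where "T\<^sub>v = T \<inter> v -` {0..}"
  have "closed T\<^sub>v"
    unfolding T\<^sub>v_def using cont(2) T by (intro continuous_closed_preimage) (auto intro: compact_imp_closed)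
  then have "compact T\<^sub>v"
    using compact_Int_closed[OF T, of T\<^sub>v] by (simp add: T\<^sub>v_def Int_assoc[symmetric])
  moreover have "continuous_on T\<^sub>v (\<lambda>t. - u t)"
    using cont(1) by (auto intro: continuous_on_minus continuous_on_subset simp: T\<^sub>v_def)
  moreover have "\<forall>t\<in>T\<^sub>v. 0 < - u t"
    using u_nonpos v_neg by (force simp: T\<^sub>v_def)
  ultimately obtain \<rho> where \<rho>: "0 < \<rho>" "\<forall>t\<in>T\<^sub>v. \<rho> \<le> - u t"
    by (rule continuous_on_compact_pos_bounded_below)
  have "bounded (v ` T)" using T cont(2) by (intro compact_imp_bounded compact_continuous_image)
  then obtain M where M: "0 < M" "\<forall>t\<in>T. \<bar>v t\<bar> \<le> M"
    by (auto simp: bounded_pos)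
  show ?thesis
  proof
    show "0 < \<rho> / M" using \<rho> M by simp
    show "\<forall>t\<in>T. u t + \<rho> / M * v t \<le> 0"
    proof
      fix t assume t: "t \<in> T"
      show "u t + \<rho> / M * v t \<le> 0"
      proof (cases "0 \<le> v t")
        case True
        have "\<rho> / M * v t \<le> \<rho> / M * M" using M t \<rho> by (intro mult_left_mono) auto
        moreover have "\<rho> \<le> - u t" using \<rho>(2) t True by (simp add: T\<^sub>v_def)
        ultimately show ?thesis using M by simp
      next
        case False
        then have "\<rho> / M * v t \<le> 0" using \<rho> M by (intro mult_nonneg_nonpos) auto
        then show ?thesis using u_nonpos t by (simp add: add_nonpos_nonpos)
      qed
    qed
  qed
qed

lemma abs_diff_le_supdist:
  fixes T :: "'z::metric_space set"
  assumes "compact T" "continuous_on T b" "continuous_on T b'" "t \<in> T"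
  shows "\<bar>b t - b' t\<bar> \<le> supdist T b b'"
proof -
  have "bounded ((\<lambda>t. \<bar>b t - b' t\<bar>) ` T)"
    using assms by (intro compact_imp_bounded compact_continuous_image continuous_intros)
  then show ?thesis
    unfolding supdist_def using assms(4) by (intro cSup_upper) (auto dest: bounded_imp_bdd_above)
qed

lemma supdist_nonneg:
  fixes T :: "'z::metric_space set"
  assumes "compact T" "continuous_on T b" "continuous_on T b'"
  shows "0 \<le> supdist T b b'"
proof -
  have "bounded ((\<lambda>t. \<bar>b t - b' t\<bar>) ` T)"
    using assms by (intro compact_imp_bounded compact_continuous_image continuous_intros)
  then show ?thesis
    unfolding supdist_def by (intro cSup_upper) (auto dest: bounded_imp_bdd_above)
qed

lemma supdist_le:
  assumes "0 \<le> M" "\<And>t. t \<in> T \<Longrightarrow> \<bar>b t - b' t\<bar> \<le> M"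
  shows "supdist T b b' \<le> M"
  unfolding supdist_def using assms by (intro cSup_least) auto

definition local_error_bound :: "('a::real_normed_vector \<Rightarrow> real) \<Rightarrow> real \<Rightarrow> 'a \<Rightarrow> bool" where
  "local_error_bound \<phi> q xbar \<longleftrightarrow> (\<exists>\<tau>>0. \<exists>\<delta>>0. \<forall>x. norm (x - xbar) < \<delta> \<longrightarrow>
     \<tau> * infdist x {y. \<phi> y \<le> 0} \<le> (max (\<phi> x) 0) powr q)"

lemma local_error_boundI_small_values:
  assumes "0 < \<tau>" "0 < \<delta>" "0 < \<epsilon>" "0 < q" "\<phi> xbar \<le> 0"
    and small: "\<And>x. norm (x - xbar) < \<delta> \<Longrightarrow> \<phi> x < \<epsilon> \<Longrightarrow>
                  \<tau> * infdist x {y. \<phi> y \<le> 0} \<le> (max (\<phi> x) 0) powr q"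
  shows "local_error_bound \<phi> q xbar"
  unfolding local_error_bound_def
proof (intro exI conjI allI impI)
  show "0 < min \<tau> (\<epsilon> powr q / \<delta>)" using assms by simp
  show "0 < \<delta>" by fact
  fix x assume x: "norm (x - xbar) < \<delta>"
  let ?I = "infdist x {y. \<phi> y \<le> 0}"
  have I: "0 \<le> ?I" by (rule infdist_nonneg)
  show "min \<tau> (\<epsilon> powr q / \<delta>) * ?I \<le> (max (\<phi> x) 0) powr q"
  proof (cases "\<phi> x < \<epsilon>")
    case True
    have "min \<tau> (\<epsilon> powr q / \<delta>) * ?I \<le> \<tau> * ?I" using I by (intro mult_right_mono) auto
    also have "\<dots> \<le> (max (\<phi> x) 0) powr q" using small x True .
    finally show ?thesis .
  next
    case False
    have "?I \<le> \<delta>"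
      using infdist_le[of xbar "{y. \<phi> y \<le> 0}" x] assms(5) x by (simp add: dist_norm)
    then have "min \<tau> (\<epsilon> powr q / \<delta>) * ?I \<le> \<epsilon> powr q / \<delta> * \<delta>"
      using I assms by (intro mult_mono) auto
    also have "\<dots> \<le> (max (\<phi> x) 0) powr q"
      using False assms by (auto intro: powr_mono2)
    finally show ?thesis .
  qed
qed

lemma q_calm_if_local_error_bound:
  fixes \<phi> :: "'x::real_normed_vector \<Rightarrow> real"
  assumes eb: "local_error_bound \<phi> q xbar" and q: "0 < q"
    and S: "S ybar = {x. \<phi> x \<le> 0}"
    and nonneg: "\<And>y. y \<in> Y \<Longrightarrow> 0 \<le> dY y ybar"
    and growth: "\<And>r. 0 < r \<Longrightarrow> \<exists>K>0. \<exists>\<epsilon>>0. \<forall>y\<in>Y. dY y ybar < \<epsilon> \<longrightarrow>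
                   (\<forall>x\<in>S y. dist x xbar < r \<longrightarrow> \<phi> x \<le> K * dY y ybar)"
  shows "q_calm dY Y S q ybar xbar"
proof -
  obtain \<tau> \<delta> where \<tau>: "0 < \<tau>" and \<delta>: "0 < \<delta>"
    and bound: "\<And>x. norm (x - xbar) < \<delta> \<Longrightarrow> \<tau> * infdist x {y. \<phi> y \<le> 0} \<le> (max (\<phi> x) 0) powr q"
    using eb unfolding local_error_bound_def by blast
  obtain K \<epsilon> where K: "0 < K" and \<epsilon>: "0 < \<epsilon>"
    and grow: "\<And>y x. y \<in> Y \<Longrightarrow> dY y ybar < \<epsilon> \<Longrightarrow> x \<in> S y \<Longrightarrow> dist x xbar < \<delta> \<Longrightarrow>
                 \<phi> x \<le> K * dY y ybar"
    using growth[OF \<delta>] by blast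
  have "\<tau> / K powr q * infdist x (S ybar) \<le> (dY y ybar) powr q"
    if "y \<in> Y" "dY y ybar < \<epsilon>" "x \<in> S y" "dist x xbar < \<delta>" for y x
  proof -
    have d: "0 \<le> dY y ybar" using nonneg that(1) .
    have "\<tau> * infdist x (S ybar) \<le> (max (\<phi> x) 0) powr q"
      using bound that(4) S by (simp add: dist_norm)
    also have "\<dots> \<le> (K * dY y ybar) powr q"
      using grow[OF that] K d q by (intro powr_mono2) auto
    also have "\<dots> = K powr q * (dY y ybar) powr q"
      using K d by (simp add: powr_mult)
    finally show ?thesis using K by (simp add: divide_le_eq mult.commute mult.left_commute)
  qed
  then show ?thesis
    unfolding q_calm_def using \<tau> \<delta> \<epsilon> K by (intro exI[of _ "\<tau> / K powr q"]) auto
qed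

lemma q_calm_transfer:
  fixes S :: "'y \<Rightarrow> 'x::metric_space set" and S' :: "'w \<Rightarrow> 'x set"
  assumes calm: "q_calm dW W S' q wbar xbar" and q: "0 < q" and K: "0 < K"
    and same: "S' wbar = S ybar"
    and move: "\<And>y x. y \<in> Y \<Longrightarrow> x \<in> S y \<Longrightarrow>
                 \<exists>w\<in>W. x \<in> S' w \<and> 0 \<le> dW w wbar \<and> dW w wbar \<le> K * dY y ybar"
  shows "q_calm dY Y S q ybar xbar"
proof -
  obtain \<tau> \<delta> \<epsilon> where \<tau>: "0 < \<tau>" and \<delta>: "0 < \<delta>" and \<epsilon>: "0 < \<epsilon>"
    and calmW: "\<And>w x. w \<in> W \<Longrightarrow> dW w wbar < \<epsilon> \<Longrightarrow> x \<in> S' w \<Longrightarrow> dist x xbar < \<delta> \<Longrightarrow>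
                  \<tau> * infdist x (S ybar) \<le> (dW w wbar) powr q"
    using calm same unfolding q_calm_def by metis
  have "\<tau> / K powr q * infdist x (S ybar) \<le> (dY y ybar) powr q"
    if y: "y \<in> Y" "dY y ybar < \<epsilon> / K" and x: "x \<in> S y" "dist x xbar < \<delta>" for y x
  proof -
    obtain w where w: "w \<in> W" "x \<in> S' w" "0 \<le> dW w wbar" "dW w wbar \<le> K * dY y ybar"
      using move[OF y(1) x(1)] by blast
    have d: "0 \<le> dY y ybar" using order_trans[OF w(3,4)] K by (simp add: zero_le_mult_iff)
    have "dW w wbar < \<epsilon>" using w(4) y(2) K by (simp add: pos_less_divide_eq mult.commute)
    then have "\<tau> * infdist x (S ybar) \<le> (dW w wbar) powr q" using calmW w(1,2) x(2) by blast
    also have "\<dots> \<le> (K * dY y ybar) powr q" using w(3,4) q by (intro powr_mono2) auto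
    also have "\<dots> = K powr q * (dY y ybar) powr q" using K d by (simp add: powr_mult)
    finally show ?thesis using K by (simp add: divide_le_eq mult.commute mult.left_commute)
  qed
  then show ?thesis
    unfolding q_calm_def using \<tau> \<delta> \<epsilon> K by (intro exI[of _ "\<tau> / K powr q"] exI[of _ \<delta>] exI[of _ "\<epsilon> / K"] conjI) auto
qed

definition riesz_vector :: "('a::euclidean_space \<Rightarrow> real) \<Rightarrow> 'a" where
  "riesz_vector h = (\<Sum>i\<in>Basis. h i *\<^sub>R i)"

lemma linear_eq_inner_riesz_vector:
  fixes h :: "'a::euclidean_space \<Rightarrow> real"
  assumes "linear h"
  shows "h x = inner (riesz_vector h) x"
proof -
  have "h x = (\<Sum>i\<in>Basis. (x \<bullet> i) * (h i \<bullet> 1))"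
    using Linear_Algebra.linear_componentwise[OF assms, of x 1] by simp
  then show ?thesis
    unfolding riesz_vector_def by (simp add: inner_sum_right inner_commute mult.commute)
qed

lemma continuous_on_riesz_vector:
  assumes "\<And>x. continuous_on T (\<lambda>t. g t x)"
  shows "continuous_on T (\<lambda>t. riesz_vector (g t))"
  unfolding riesz_vector_def by (intro continuous_intros assms)

lemma farkas_compact:
  fixes P :: "'a::euclidean_space set"
  assumes P: "compact P" "0 \<notin> convex hull P"
    and no_descent: "\<And>w. \<forall>p\<in>P. inner p w \<le> 0 \<Longrightarrow> 0 \<le> inner u w"
  obtains S \<mu> where "finite S" "S \<subseteq> P" "\<forall>p\<in>S. 0 < \<mu> p" "- u = (\<Sum>p\<in>S. \<mu> p *\<^sub>R p)"
proof -
  define K where "K = convex_cone hull P"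
  have K_eq: "K = insert 0 (conic hull (convex hull P))"
    unfolding K_def by (rule convex_cone_hull_separate)
  have "closed K"
    unfolding K_eq using P by (intro closed_insert closed_conic_hull) (auto intro: compact_convex_hull)
  have "- u \<in> K"
  proof (rule ccontr)
    assume "- u \<notin> K"
    then obtain a b where ab: "inner a (- u) < b" "\<forall>k\<in>K. b < inner a k"
      using separating_hyperplane_closed_point[OF convex_convex_cone_hull \<open>closed K\<close>[unfolded K_def]]
      unfolding K_def by blast
    have "b < 0" using ab(2) convex_cone_hull_contains_0 unfolding K_def by force
    \<comment> \<open>a linear functional bounded below on a cone is nonnegative on it\<close>
    have a_nonneg: "0 \<le> inner a k" if "k \<in> K" for k
    proof (rule ccontr)
      assume neg: "\<not> 0 \<le> inner a k"
      then have "(b / inner a k) *\<^sub>R k \<in> K"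
        using \<open>b < 0\<close> that conic_convex_cone_hull unfolding K_def
        by (intro conicD) (auto simp: divide_nonpos_neg)
      with ab(2) have "b < inner a ((b / inner a k) *\<^sub>R k)" by blast
      with neg show False by simp
    qed
    have "P \<subseteq> K" unfolding K_def by (rule hull_subset)
    then have "\<forall>p\<in>P. inner p (- a) \<le> 0"
      using a_nonneg by (auto simp: inner_commute)
    from no_descent[OF this] have "0 \<le> inner a (- u)" by (simp add: inner_commute)
    with ab(1) \<open>b < 0\<close> show False by simp
  qed
  then consider "u = 0" | c p where "0 \<le> c" "p \<in> convex hull P" "- u = c *\<^sub>R p"
    unfolding K_eq conic_hull_explicit by auto
  then show ?thesis
  proof cases
    case 1
    then show ?thesis using that[of "{}"] by simp
  next
    case (2 c p)
    then obtain S\<^sub>0 w where S\<^sub>0: "finite S\<^sub>0" "S\<^sub>0 \<subseteq> P" "\<forall>v\<in>S\<^sub>0. 0 \<le> w v"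
        and p: "(\<Sum>v\<in>S\<^sub>0. w v *\<^sub>R v) = p"
      unfolding convex_hull_explicit by blast
    define S where "S = {v\<in>S\<^sub>0. 0 < c * w v}"
    have "- u = (\<Sum>v\<in>S\<^sub>0. (c * w v) *\<^sub>R v)"
      unfolding 2(3) p[symmetric] by (simp add: scaleR_sum_right)
    also have "\<dots> = (\<Sum>v\<in>S. (c * w v) *\<^sub>R v)"
      using S\<^sub>0 \<open>0 \<le> c\<close> unfolding S_def
      by (intro sum.mono_neutral_right) (auto simp: antisym_conv1)
    finally show ?thesis
      using S\<^sub>0 by (intro that[of S "\<lambda>v. c * w v"]) (auto simp: S_def)
  qed
qed

lemma lower_bound_from_weighted_sum:
  fixes w e :: "'i \<Rightarrow> real"
  assumes A: "finite A" "t \<in> A" and w: "\<forall>s\<in>A. 0 < w s"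
    and upper: "\<forall>s\<in>A. e s \<le> d" and "0 \<le> d" and sum: "- d \<le> (\<Sum>s\<in>A. w s * e s)"
  shows "- ((1 + sum w A) * (\<Sum>s\<in>A. 1 / w s) * d) \<le> e t"
proof -
  have "0 < w t" "0 \<le> sum w A" using w A(2) by (auto intro: sum_nonneg less_imp_le)
  have "(\<Sum>s\<in>A - {t}. w s * e s) \<le> (\<Sum>s\<in>A - {t}. w s * d)"
    using upper w by (intro sum_mono mult_left_mono) auto
  also have "\<dots> = sum w (A - {t}) * d" by (simp add: sum_distrib_right)
  also have "\<dots> \<le> sum w A * d"
    using A w \<open>0 \<le> d\<close> by (intro mult_right_mono sum_mono2) auto
  finally have "- ((1 + sum w A) * d) \<le> e t * w t"
    using sum sum.remove[OF A, of "\<lambda>s. w s * e s"] by (simp add: algebra_simps)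
  then have "- ((1 + sum w A) * d) * (1 / w t) \<le> e t"
    using \<open>0 < w t\<close> by (simp only: times_divide_eq_right mult_1_right pos_divide_le_eq)
  moreover have "(1 + sum w A) * d * (1 / w t) \<le> (1 + sum w A) * d * (\<Sum>s\<in>A. 1 / w s)"
    using A w \<open>0 \<le> d\<close> \<open>0 \<le> sum w A\<close> by (intro mult_left_mono member_le_sum) auto
  ultimately show ?thesis by (simp add: mult_ac)
qed

lemma optset_obj_le:
  assumes "x \<in> optset T f g (c, b)" "\<forall>t\<in>T. g t y \<le> b t"
  shows "f x + inner c' x \<le> f y + inner c' y + norm (c - c') * norm (y - x)"
proof -
  have "f x + inner c x \<le> f y + inner c y"
    using assms by (simp add: optset_def feas_def)
  moreover have "inner (c - c') (y - x) \<le> norm (c - c') * norm (y - x)"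
    by (rule norm_cauchy_schwarz)
  ultimately show ?thesis
    by (simp add: inner_diff_left inner_diff_right)
qed

locale sip =
  fixes T :: "'z::metric_space set" and f :: "'a::real_inner \<Rightarrow> real" and g :: "'z \<Rightarrow> 'a \<Rightarrow> real"
    and cbar :: 'a and bbar :: "'z \<Rightarrow> real" and xbar :: 'a
  assumes compact_T: "compact T"
    and continuous_g: "\<And>x. continuous_on T (\<lambda>t. g t x)"
    and continuous_bbar: "continuous_on T bbar"
    and xbar_optimal: "xbar \<in> optset T f g (cbar, bbar)"
begin

abbreviation obj :: "'a \<Rightarrow> real" where
  "obj x \<equiv> f x + inner cbar x"

abbreviation fbar :: "'a \<Rightarrow> real" where
  "fbar \<equiv> supfun T f g cbar bbar xbar"

lemma xbar_feasible: "\<forall>t\<in>T. g t xbar \<le> bbar t"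
  using xbar_optimal by (simp add: optset_def feas_def)

lemma obj_xbar_le: "\<forall>t\<in>T. g t y \<le> bbar t \<Longrightarrow> obj xbar \<le> obj y"
  using xbar_optimal by (simp add: optset_def feas_def)

lemma fbar_le_iff: "fbar x \<le> M \<longleftrightarrow> obj x - obj xbar \<le> M \<and> (\<forall>t\<in>T. g t x - bbar t \<le> M)"
proof -
  have "bounded ((\<lambda>t. g t x - bbar t) ` T)"
    using compact_T continuous_g continuous_bbar
    by (intro compact_imp_bounded compact_continuous_image continuous_intros)
  then have "bdd_above (insert (obj x - obj xbar) ((\<lambda>t. g t x - bbar t) ` T))"
    by (auto dest: bounded_imp_bdd_above)
  moreover have obj_diff: "f x - f xbar + inner cbar (x - xbar) = obj x - obj xbar"
    by (simp add: inner_diff_right)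
  ultimately show ?thesis
    unfolding supfun_def obj_diff by (simp add: cSup_le_iff)
qed

lemma sublevel_fbar_eq_optset: "{x. fbar x \<le> 0} = optset T f g (cbar, bbar)"
  using obj_xbar_le xbar_feasible
  by (fastforce simp: fbar_le_iff optset_def feas_def)

lemma levelset_xbar_eq_optset: "levelset T f g cbar (obj xbar, bbar) = optset T f g (cbar, bbar)"
  using obj_xbar_le xbar_feasible
  by (fastforce simp: levelset_def optset_def feas_def)

lemma fbar_xbar_nonpos: "fbar xbar \<le> 0"
  using xbar_optimal sublevel_fbar_eq_optset by blast

lemma fbar_levelset_le:
  assumes "continuous_on T b" "x \<in> levelset T f g cbar (\<alpha>, b)"
  shows "fbar x \<le> ldist T (\<alpha>, b) (obj xbar, bbar)"
proof -
  have "\<bar>b t - bbar t\<bar> \<le> ldist T (\<alpha>, b) (obj xbar, bbar)" if "t \<in> T" for t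
    using abs_diff_le_supdist[OF compact_T assms(1) continuous_bbar that] by (simp add: ldist_def)
  then show ?thesis
    using assms(2) by (force simp: fbar_le_iff ldist_def levelset_def feas_def)
qed

lemma compact_active_constraints: "compact {t\<in>T. g t xbar = bbar t}"
proof -
  have "{t\<in>T. g t xbar = bbar t} = T \<inter> (\<lambda>t. g t xbar - bbar t) -` {0}"
    by auto
  also have "closed \<dots>"
    using continuous_g continuous_bbar compact_imp_closed[OF compact_T]
    by (intro continuous_closed_preimage continuous_intros) auto
  finally have "compact (T \<inter> {t\<in>T. g t xbar = bbar t})"
    by (rule compact_Int_closed[OF compact_T])
  then show ?thesis
    by (simp add: Int_absorb1 subset_iff)
qed

lemma levelset_calm_imp_local_error_bound:
  assumes calm: "q_calm (ldist T) {p. continuous_on T (snd p)} (levelset T f g cbar) q (obj xbar, bbar) xbar"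
    and q: "0 < q"
  shows "local_error_bound fbar q xbar"
proof -
  obtain \<tau> \<delta> \<epsilon> where \<tau>: "0 < \<tau>" and \<delta>: "0 < \<delta>" and \<epsilon>: "0 < \<epsilon>"
    and H: "\<And>p x. continuous_on T (snd p) \<Longrightarrow> ldist T p (obj xbar, bbar) < \<epsilon> \<Longrightarrow>
              x \<in> levelset T f g cbar p \<Longrightarrow> dist x xbar < \<delta> \<Longrightarrow>
              \<tau> * infdist x (levelset T f g cbar (obj xbar, bbar)) \<le> (ldist T p (obj xbar, bbar)) powr q"
    using calm unfolding q_calm_def by auto
  show ?thesis
  proof (rule local_error_boundI_small_values[where \<phi> = fbar, OF \<tau> \<delta> \<epsilon> q fbar_xbar_nonpos])
    fix x assume x: "norm (x - xbar) < \<delta>" "fbar x < \<epsilon>"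
    define r where "r = max (fbar x) 0"
    define p where "p = (obj xbar + r, \<lambda>t. bbar t + r)"
    have r: "0 \<le> r" "r < \<epsilon>" using x \<epsilon> by (auto simp: r_def)
    have "ldist T p (obj xbar, bbar) \<le> r"
      using r by (auto simp: p_def ldist_def intro: supdist_le)
    moreover have "0 \<le> ldist T p (obj xbar, bbar)" by (simp add: ldist_def)
    moreover have "x \<in> levelset T f g cbar p"
      using fbar_le_iff[of x r] by (auto simp: r_def p_def levelset_def feas_def)
    moreover have "continuous_on T (snd p)"
      unfolding p_def using continuous_bbar by (auto intro: continuous_intros)
    ultimately have "\<tau> * infdist x {y. fbar y \<le> 0} \<le> (ldist T p (obj xbar, bbar)) powr q"
      using H[of p x] r x(1) by (simp add: dist_norm levelset_xbar_eq_optset sublevel_fbar_eq_optset)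
    also have "\<dots> \<le> r powr q"
      using \<open>ldist T p (obj xbar, bbar) \<le> r\<close> \<open>0 \<le> ldist T p (obj xbar, bbar)\<close> q by (intro powr_mono2) auto
    finally show "\<tau> * infdist x {y. fbar y \<le> 0} \<le> (max (fbar x) 0) powr q"
      by (simp add: r_def)
  qed
qed

lemma local_error_bound_imp_levelset_calm:
  assumes eb: "local_error_bound fbar q xbar" and q: "0 < q"
  shows "q_calm (ldist T) {p. continuous_on T (snd p)} (levelset T f g cbar) q (obj xbar, bbar) xbar"
proof (rule q_calm_if_local_error_bound[OF eb q])
  show "levelset T f g cbar (obj xbar, bbar) = {x. fbar x \<le> 0}"
    by (simp add: levelset_xbar_eq_optset sublevel_fbar_eq_optset)
  show "0 \<le> ldist T p (obj xbar, bbar)" for p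
    by (simp add: ldist_def)
  have "fbar x \<le> 1 * ldist T p (obj xbar, bbar)"
    if "continuous_on T (snd p)" "x \<in> levelset T f g cbar p" for p x
    using fbar_levelset_le[of "snd p" x "fst p"] that by simp
  then show "\<exists>K>0. \<exists>\<epsilon>>0. \<forall>p\<in>{p. continuous_on T (snd p)}. ldist T p (obj xbar, bbar) < \<epsilon> \<longrightarrow>
               (\<forall>x\<in>levelset T f g cbar p. dist x xbar < r \<longrightarrow> fbar x \<le> K * ldist T p (obj xbar, bbar))" for r
    by (intro exI[of _ 1] conjI) auto
qed

lemma optset_calm_imp_rhs_calm:
  assumes calm: "q_calm (pdist T) {p. continuous_on T (snd p)} (optset T f g) q (cbar, bbar) xbar"
    and q: "0 < q"
  shows "q_calm (supdist T) {b. continuous_on T b} (\<lambda>b. optset T f g (cbar, b)) q bbar xbar"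
proof (rule q_calm_transfer[OF calm q zero_less_one])
  fix b x assume "b \<in> {b. continuous_on T b}" "x \<in> optset T f g (cbar, b)"
  moreover from this have "0 \<le> supdist T b bbar"
    using supdist_nonneg[OF compact_T _ continuous_bbar] by simp
  ultimately show "\<exists>p\<in>{p. continuous_on T (snd p)}. x \<in> optset T f g p \<and>
                     0 \<le> pdist T p (cbar, bbar) \<and> pdist T p (cbar, bbar) \<le> 1 * supdist T b bbar"
    by (intro bexI[of _ "(cbar, b)"]) (auto simp: pdist_def)
qed simp

end

locale slater_sip = sip +
  assumes slater: "\<exists>xh. \<forall>t\<in>T. g t xh < bbar t"
begin

lemma uniform_slater_point:
  obtains xh s where "0 < s" "\<forall>t\<in>T. g t xh + s \<le> bbar t"
proof -
  obtain xh where "\<forall>t\<in>T. 0 < bbar t - g t xh" using slater by auto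
  moreover have "continuous_on T (\<lambda>t. bbar t - g t xh)"
    using continuous_bbar continuous_g by (intro continuous_intros)
  ultimately obtain s where "0 < s" "\<forall>t\<in>T. s \<le> bbar t - g t xh"
    using continuous_on_compact_pos_bounded_below[OF compact_T] by blast
  then show ?thesis using that[of s xh] by force
qed

end

locale convex_sip = slater_sip +
  assumes convex_f: "convex_on UNIV f"
    and convex_g: "\<forall>t\<in>T. convex_on UNIV (g t)"
begin

lemma fbar_optset_le:
  assumes slater_point: "0 < s" "\<forall>t\<in>T. g t xh + s \<le> bbar t"
    and b: "continuous_on T b" and close: "pdist T (c, b) (cbar, bbar) < s"
    and x: "x \<in> optset T f g (c, b)"
  shows "fbar x \<le> ((obj xh - obj xbar) / s + norm (xh - xbar) + norm (x - xbar) + 1)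
                    * pdist T (c, b) (cbar, bbar)"
    (is "_ \<le> ?K * ?d")
proof -
  have c: "norm (c - cbar) \<le> ?d" and "supdist T b bbar \<le> ?d"
    by (simp_all add: pdist_def)
  then have b_close: "\<forall>t\<in>T. \<bar>b t - bbar t\<bar> \<le> ?d"
    using abs_diff_le_supdist[OF compact_T b continuous_bbar] order_trans by blast
  have "0 \<le> ?d" using c norm_ge_zero order_trans by blast
  define \<theta> where "\<theta> = ?d / s"
  have \<theta>: "0 \<le> \<theta>" "\<theta> \<le> 1" "\<theta> * s = ?d"
    using \<open>0 \<le> ?d\<close> close slater_point(1) by (auto simp: \<theta>_def)
  \<comment> \<open>moving from \<open>xbar\<close> towards the Slater point restores feasibility for the perturbed right-hand side\<close>
  define y where "y = (1 - \<theta>) *\<^sub>R xbar + \<theta> *\<^sub>R xh"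
  have y_feasible: "\<forall>t\<in>T. g t y \<le> b t"
  proof
    fix t assume t: "t \<in> T"
    have "g t y \<le> (1 - \<theta>) * g t xbar + \<theta> * g t xh"
      unfolding y_def using convex_g t \<theta> by (intro convex_onD) auto
    also have "\<dots> \<le> (1 - \<theta>) * bbar t + \<theta> * (bbar t - s)"
      using xbar_feasible slater_point t \<theta> by (intro add_mono mult_left_mono) auto
    also have "\<dots> \<le> b t" using b_close t \<theta>(3) by (auto simp: algebra_simps)
    finally show "g t y \<le> b t" .
  qed
  have "f y \<le> (1 - \<theta>) * f xbar + \<theta> * f xh"
    unfolding y_def using convex_f \<theta> by (intro convex_onD) auto
  moreover have "inner cbar y = (1 - \<theta>) * inner cbar xbar + \<theta> * inner cbar xh"
    by (simp add: y_def inner_add_right)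
  ultimately have obj_y: "obj y - obj xbar \<le> \<theta> * (obj xh - obj xbar)"
    by (simp add: algebra_simps)
  have "y - xbar = \<theta> *\<^sub>R (xh - xbar)"
    by (simp add: y_def algebra_simps)
  then have "norm (y - xbar) \<le> norm (xh - xbar)"
    using \<theta> mult_left_le_one_le[of "norm (xh - xbar)" \<theta>] by simp
  then have yx: "norm (y - x) \<le> norm (xh - xbar) + norm (x - xbar)"
    using norm_triangle_ineq4[of "y - xbar" "x - xbar"] by simp
  have "obj x - obj xbar \<le> \<theta> * (obj xh - obj xbar) + ?d * (norm (xh - xbar) + norm (x - xbar))"
    using optset_obj_le[OF x y_feasible, of cbar] obj_y mult_mono[OF c yx \<open>0 \<le> ?d\<close> norm_ge_zero]
    by linarith
  also have "\<dots> \<le> ?K * ?d"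
    using \<open>0 \<le> ?d\<close> slater_point(1) by (simp add: \<theta>_def field_simps)
  finally have obj_bound: "obj x - obj xbar \<le> ?K * ?d" .
  have "obj xbar \<le> obj xh"
    using slater_point by (intro obj_xbar_le) force
  then have "1 \<le> ?K"
    using slater_point(1) norm_ge_zero[of "xh - xbar"] norm_ge_zero[of "x - xbar"] by simp
  then have "?d \<le> ?K * ?d"
    using \<open>0 \<le> ?d\<close> mult_right_mono[of 1 ?K ?d] by simp
  then have "\<forall>t\<in>T. g t x - bbar t \<le> ?K * ?d"
    using x b_close by (force simp: optset_def feas_def)
  with obj_bound show ?thesis by (simp add: fbar_le_iff)
qed

lemma local_error_bound_imp_optset_calm:
  assumes eb: "local_error_bound fbar q xbar" and q: "0 < q"
  shows "q_calm (pdist T) {p. continuous_on T (snd p)} (optset T f g) q (cbar, bbar) xbar"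
proof (rule q_calm_if_local_error_bound[OF eb q])
  show "optset T f g (cbar, bbar) = {x. fbar x \<le> 0}"
    by (simp add: sublevel_fbar_eq_optset)
  show "0 \<le> pdist T p (cbar, bbar)" for p
    by (simp add: pdist_def le_max_iff_disj)
  fix r :: real assume "0 < r"
  obtain xh s where slater_point: "0 < s" "\<forall>t\<in>T. g t xh + s \<le> bbar t"
    by (rule uniform_slater_point)
  define K where "K = (obj xh - obj xbar) / s + norm (xh - xbar) + r + 1"
  have "obj xbar \<le> obj xh"
    using slater_point by (intro obj_xbar_le) force
  then have "0 < K" using slater_point \<open>0 < r\<close> by (simp add: K_def add_nonneg_pos)
  moreover have "fbar x \<le> K * pdist T p (cbar, bbar)"
    if "continuous_on T (snd p)" "pdist T p (cbar, bbar) < s"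
      "x \<in> optset T f g p" "dist x xbar < r" for p x
  proof -
    obtain c b where p: "p = (c, b)" by fastforce
    have "fbar x \<le> ((obj xh - obj xbar) / s + norm (xh - xbar) + norm (x - xbar) + 1) * pdist T p (cbar, bbar)"
      using fbar_optset_le[OF slater_point] that by (simp add: p)
    also have "\<dots> \<le> K * pdist T p (cbar, bbar)"
      using that(4) by (intro mult_right_mono) (auto simp: K_def dist_norm pdist_def le_max_iff_disj)
    finally show ?thesis .
  qed
  ultimately show "\<exists>K>0. \<exists>\<epsilon>>0. \<forall>p\<in>{p. continuous_on T (snd p)}. pdist T p (cbar, bbar) < \<epsilon> \<longrightarrow>
          (\<forall>x\<in>optset T f g p. dist x xbar < r \<longrightarrow> fbar x \<le> K * pdist T p (cbar, bbar))"
    using slater_point(1) by blast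
qed

end

locale linear_sip = slater_sip T f g cbar bbar xbar
  for T :: "'z::metric_space set" and f :: "'a::euclidean_space \<Rightarrow> real" and g cbar bbar xbar +
  assumes linear_f: "linear f"
    and linear_g: "\<forall>t\<in>T. linear (g t)"
begin

lemma linear_obj: "linear obj"
  using linear_f bounded_linear.linear[OF bounded_linear_inner_right] by (rule linear_compose_add)

lemma obj_nonneg_if_active_neg:
  assumes active: "\<forall>t\<in>T. g t xbar = bbar t \<longrightarrow> g t v < 0"
  shows "0 \<le> obj v"
proof -
  have "continuous_on T (\<lambda>t. g t xbar - bbar t)" "continuous_on T (\<lambda>t. g t v)"
    using continuous_g continuous_bbar by (auto intro: continuous_intros)
  moreover have "\<forall>t\<in>T. g t xbar - bbar t \<le> 0" "\<forall>t\<in>T. g t xbar - bbar t = 0 \<longrightarrow> g t v < 0"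
    using xbar_feasible active by auto
  ultimately obtain \<sigma> where \<sigma>: "0 < \<sigma>" "\<forall>t\<in>T. g t xbar - bbar t + \<sigma> * g t v \<le> 0"
    by (rule small_step_stays_nonpos[OF compact_T])
  have "g t (xbar + \<sigma> *\<^sub>R v) = g t xbar + \<sigma> * g t v" if "t \<in> T" for t
    using linear_g that by (simp add: linear_add linear_scale)
  then have "\<forall>t\<in>T. g t (xbar + \<sigma> *\<^sub>R v) \<le> bbar t"
    using \<sigma>(2) by fastforce
  then have "obj xbar \<le> obj (xbar + \<sigma> *\<^sub>R v)" by (rule obj_xbar_le)
  then have "0 \<le> \<sigma> * obj v"
    using linear_f by (simp add: linear_add linear_scale inner_add_right algebra_simps)
  then show ?thesis using \<sigma>(1) by (simp add: zero_le_mult_iff)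
qed

lemma obj_nonneg_if_active_nonpos:
  assumes active: "\<forall>t\<in>T. g t xbar = bbar t \<longrightarrow> g t w \<le> 0"
  shows "0 \<le> obj w"
proof -
  obtain xh s where slater_point: "0 < s" "\<forall>t\<in>T. g t xh + s \<le> bbar t"
    by (rule uniform_slater_point)
  \<comment> \<open>tilting \<open>w\<close> towards the Slater point makes all active constraints strictly decrease\<close>
  have tilted: "0 \<le> obj w + \<eta> * (obj xh - obj xbar)" if "0 < \<eta>" for \<eta>
  proof -
    define v where "v = w + \<eta> *\<^sub>R (xh - xbar)"
    have "g t v < 0" if "t \<in> T" "g t xbar = bbar t" for t
    proof -
      have "g t v = g t w + \<eta> * (g t xh - g t xbar)"
        using linear_g that(1) by (simp add: v_def linear_add linear_scale linear_diff)
      moreover have "\<eta> * (g t xh - g t xbar) \<le> \<eta> * (- s)"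
        using slater_point that \<open>0 < \<eta>\<close> by (intro mult_left_mono) auto
      moreover have "\<eta> * (- s) < 0" using \<open>0 < \<eta>\<close> slater_point(1) by (simp add: mult_pos_neg)
      ultimately show "g t v < 0" using active that by fastforce
    qed
    then have "0 \<le> obj v" by (intro obj_nonneg_if_active_neg) auto
    then show ?thesis
      using linear_f by (simp add: v_def linear_add linear_scale linear_diff inner_add_right inner_diff_right algebra_simps)
  qed
  have "((\<lambda>\<eta>. obj w + \<eta> * (obj xh - obj xbar)) \<longlongrightarrow> obj w) (at_right 0)"
    by (auto intro!: tendsto_eq_intros)
  moreover have "\<forall>\<^sub>F \<eta> in at_right 0. 0 \<le> obj w + \<eta> * (obj xh - obj xbar)"
    using eventually_at_right_less[of 0] by (rule eventually_mono) (rule tilted)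
  ultimately show ?thesis
    by (rule tendsto_lowerbound) simp
qed

definition kkt_multipliers :: "'z set \<Rightarrow> ('z \<Rightarrow> real) \<Rightarrow> bool" where
  "kkt_multipliers A \<mu> \<longleftrightarrow> finite A \<and> A \<subseteq> {t\<in>T. g t xbar = bbar t} \<and> (\<forall>t\<in>A. 0 < \<mu> t)
     \<and> (\<forall>y. obj y + (\<Sum>t\<in>A. \<mu> t * g t y) = 0)"

lemma kkt_multipliers_exist:
  obtains A \<mu> where "kkt_multipliers A \<mu>"
proof -
  obtain xh s where slater_point: "0 < s" "\<forall>t\<in>T. g t xh + s \<le> bbar t"
    by (rule uniform_slater_point)
  define active where "active = {t\<in>T. g t xbar = bbar t}"
  define grad where "grad t = riesz_vector (g t)" for t
  have grad: "inner (grad t) y = g t y" if "t \<in> T" for t y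
    using linear_eq_inner_riesz_vector[of "g t" y] linear_g that by (simp add: grad_def)
  have "continuous_on active grad"
    unfolding grad_def using continuous_on_riesz_vector[OF continuous_g]
    by (rule continuous_on_subset) (auto simp: active_def)
  then have compact_grads: "compact (grad ` active)"
    using compact_active_constraints unfolding active_def by (rule compact_continuous_image)
  \<comment> \<open>the Slater point separates the active gradients from the origin\<close>
  have "grad ` active \<subseteq> {p. inner p (xh - xbar) \<le> - s}"
    using slater_point linear_g by (auto simp: active_def grad linear_diff)
  then have "convex hull (grad ` active) \<subseteq> {p. inner p (xh - xbar) \<le> - s}"
    by (intro hull_minimal) (auto simp: inner_commute intro: convex_halfspace_le[of "xh - xbar", simplified inner_commute])
  then have "0 \<notin> convex hull (grad ` active)"
    using slater_point(1) by force
  moreover have "0 \<le> inner (riesz_vector obj) w" if "\<forall>p\<in>grad ` active. inner p w \<le> 0" for w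
  proof -
    have "0 \<le> obj w"
      using that grad by (intro obj_nonneg_if_active_nonpos) (auto simp: active_def)
    then show ?thesis using linear_eq_inner_riesz_vector[OF linear_obj, of w] by simp
  qed
  ultimately obtain S \<nu> where S: "finite S" "S \<subseteq> grad ` active" "\<forall>p\<in>S. 0 < \<nu> p"
      and \<nu>: "- riesz_vector obj = (\<Sum>p\<in>S. \<nu> p *\<^sub>R p)"
    using farkas_compact[OF compact_grads] by blast
  from S(2) obtain A where A: "A \<subseteq> active" "inj_on grad A" "S = grad ` A"
    by (auto simp: subset_image_inj)
  have "obj y + (\<Sum>t\<in>A. \<nu> (grad t) * g t y) = 0" for y
  proof -
    have "obj y = - inner (\<Sum>p\<in>S. \<nu> p *\<^sub>R p) y"
      unfolding \<nu>[symmetric] using linear_eq_inner_riesz_vector[OF linear_obj, of y] by simp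
    also have "\<dots> = - (\<Sum>t\<in>A. \<nu> (grad t) * g t y)"
      using A grad by (simp add: sum.reindex inner_sum_left active_def subset_iff)
    finally show ?thesis by simp
  qed
  then show ?thesis
    using S A by (intro that[of A "\<lambda>t. \<nu> (grad t)"]) (auto simp: kkt_multipliers_def active_def finite_image_iff)
qed

lemma levelset_point_optimal_for_shifted_rhs:
  assumes kkt: "kkt_multipliers A \<mu>" and K: "(1 + sum \<mu> A) * (\<Sum>t\<in>A. 1 / \<mu> t) \<le> K"
    and b: "continuous_on T b" and x: "x \<in> levelset T f g cbar (\<alpha>, b)"
  defines "d \<equiv> ldist T (\<alpha>, b) (obj xbar, bbar)"
  shows "x \<in> optset T f g (cbar, \<lambda>t. max (g t x) (bbar t - K * d))"
proof -
  have A: "finite A" "\<forall>t\<in>A. t \<in> T \<and> g t xbar = bbar t" "\<forall>t\<in>A. 0 < \<mu> t"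
    and stationary: "\<And>y. obj y = - (\<Sum>t\<in>A. \<mu> t * g t y)"
    using kkt by (auto simp: kkt_multipliers_def subset_iff eq_neg_iff_add_eq_0)
  have "0 \<le> d" by (simp add: d_def ldist_def)
  have x_close: "obj x - obj xbar \<le> d" "\<forall>t\<in>T. g t x - bbar t \<le> d"
    using fbar_levelset_le[OF b x] by (simp_all add: d_def fbar_le_iff)
  have "(\<Sum>t\<in>A. \<mu> t * (g t x - bbar t)) = obj xbar - obj x"
    using A by (simp add: stationary right_diff_distrib sum_subtractf)
  then have sum_lower: "- d \<le> (\<Sum>t\<in>A. \<mu> t * (g t x - bbar t))"
    using x_close(1) by linarith
  have upper: "\<forall>t\<in>A. g t x - bbar t \<le> d"
    using A(2) x_close(2) by blast
  have slack_lower: "- ((1 + sum \<mu> A) * (\<Sum>t\<in>A. 1 / \<mu> t) * d) \<le> g t x - bbar t" if "t \<in> A" for t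
    using lower_bound_from_weighted_sum[OF A(1) that A(3) upper \<open>0 \<le> d\<close> sum_lower] .
  \<comment> \<open>complementary slackness: the shifted right-hand side is active at \<open>x\<close> wherever \<open>\<mu> > 0\<close>\<close>
  have active_at_x: "max (g t x) (bbar t - K * d) = g t x" if "t \<in> A" for t
    using slack_lower[OF that] mult_right_mono[OF K \<open>0 \<le> d\<close>] by (simp add: max_absorb1)
  have "obj x \<le> obj y" if y: "\<forall>t\<in>T. g t y \<le> max (g t x) (bbar t - K * d)" for y
  proof -
    have "g t y \<le> g t x" if "t \<in> A" for t
      using y A(2) active_at_x[OF that] that by fastforce
    then show ?thesis
      using A(3) by (auto simp: stationary intro!: sum_mono mult_left_mono)
  qed
  moreover have "\<forall>t\<in>T. g t x \<le> max (g t x) (bbar t - K * d)"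
    by simp
  ultimately show ?thesis
    by (auto simp: optset_def feas_def)
qed

lemma rhs_calm_imp_levelset_calm:
  assumes calm: "q_calm (supdist T) {b. continuous_on T b} (\<lambda>b. optset T f g (cbar, b)) q bbar xbar"
    and q: "0 < q"
  shows "q_calm (ldist T) {p. continuous_on T (snd p)} (levelset T f g cbar) q (obj xbar, bbar) xbar"
proof -
  obtain A \<mu> where kkt: "kkt_multipliers A \<mu>"
    by (rule kkt_multipliers_exist)
  define K where "K = 1 + (1 + sum \<mu> A) * (\<Sum>t\<in>A. 1 / \<mu> t)"
  have "\<forall>t\<in>A. 0 < \<mu> t"
    using kkt by (simp add: kkt_multipliers_def)
  then have "0 \<le> sum \<mu> A" "0 \<le> (\<Sum>t\<in>A. 1 / \<mu> t)"
    by (auto intro!: sum_nonneg simp: less_imp_le)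
  then have "1 \<le> K" by (simp add: K_def)
  show ?thesis
  proof (rule q_calm_transfer[OF calm q])
    show "0 < K" using \<open>1 \<le> K\<close> by simp
    show "optset T f g (cbar, bbar) = levelset T f g cbar (obj xbar, bbar)"
      by (simp add: levelset_xbar_eq_optset)
    fix p x assume p: "p \<in> {p. continuous_on T (snd p)}" and x: "x \<in> levelset T f g cbar p"
    obtain \<alpha> b where p_eq: "p = (\<alpha>, b)" by fastforce
    define d where "d = ldist T p (obj xbar, bbar)"
    define b' where "b' = (\<lambda>t. max (g t x) (bbar t - K * d))"
    have b: "continuous_on T b" using p by (simp add: p_eq)
    have "x \<in> optset T f g (cbar, b')"
      using levelset_point_optimal_for_shifted_rhs[OF kkt _ b] x by (simp add: b'_def K_def d_def p_eq)
    moreover have "continuous_on T b'"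
      unfolding b'_def using continuous_g continuous_bbar by (intro continuous_intros)
    moreover have "supdist T b' bbar \<le> K * d"
    proof (rule supdist_le)
      have "0 \<le> d" by (simp add: d_def ldist_def)
      then show "0 \<le> K * d" using \<open>1 \<le> K\<close> by simp
      have "\<forall>t\<in>T. g t x - bbar t \<le> d"
        using fbar_levelset_le[OF b] x by (simp add: d_def p_eq fbar_le_iff)
      moreover have "d \<le> K * d"
        using \<open>1 \<le> K\<close> \<open>0 \<le> d\<close> mult_right_mono[of 1 K d] by simp
      ultimately show "\<bar>b' t - bbar t\<bar> \<le> K * d" if "t \<in> T" for t
        using that \<open>0 \<le> K * d\<close> by (auto simp: b'_def)
    qed
    moreover have "0 \<le> supdist T b' bbar"
      using supdist_nonneg[OF compact_T \<open>continuous_on T b'\<close> continuous_bbar] .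
    ultimately show "\<exists>b'\<in>{b. continuous_on T b}. x \<in> optset T f g (cbar, b') \<and>
                       0 \<le> supdist T b' bbar \<and> supdist T b' bbar \<le> K * ldist T p (obj xbar, bbar)"
      by (auto simp: d_def)
  qed
qed

end

theorem theorem4p7:
  fixes T :: "'z::metric_space set"
    and f :: "real^'n \<Rightarrow> real"
    and g :: "'z \<Rightarrow> real^'n \<Rightarrow> real"
    and q :: real and cbar :: "real^'n" and bbar :: "'z \<Rightarrow> real" and xbar :: "real^'n"
  assumes T: "compact T" "T \<noteq> UNIV"
    and f_cvx: "convex_on UNIV f"
    and g_cvx: "\<forall>t\<in>T. convex_on UNIV (g t)"
    and g_cont: "continuous_on (T \<times> UNIV) (\<lambda>(t, x). g t x)"
    and q: "0 < q" "q \<le> 1"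
    and bbar_cont: "continuous_on T bbar"
    and xbar: "xbar \<in> optset T f g (cbar, bbar)"
    and slater: "\<exists>xh. \<forall>t\<in>T. g t xh < bbar t"
  defines "Par \<equiv> {p :: (real^'n) \<times> ('z \<Rightarrow> real). continuous_on T (snd p)}"
    and "Cset \<equiv> {b :: 'z \<Rightarrow> real. continuous_on T b}"
    and "Lpar \<equiv> {p :: real \<times> ('z \<Rightarrow> real). continuous_on T (snd p)}"
    and "fbar \<equiv> supfun T f g cbar bbar xbar"
  defines "st_i \<equiv> q_calm (pdist T) Par (optset T f g) q (cbar, bbar) xbar"
    and "st_ii \<equiv> q_calm (supdist T) Cset (\<lambda>b. optset T f g (cbar, b)) q bbar xbar"
    and "st_iii \<equiv> q_calm (ldist T) Lpar (levelset T f g cbar) q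
                   (f xbar + inner cbar xbar, bbar) xbar"
    and "st_iv \<equiv> (\<exists>\<tau>>0. \<exists>\<delta>>0. \<forall>x. norm (x - xbar) < \<delta> \<longrightarrow>
                   \<tau> * infdist x {y. fbar y \<le> 0} \<le> (max (fbar x) 0) powr q)"
  shows "(st_iii \<longleftrightarrow> st_iv) \<and> (st_iv \<longrightarrow> st_i) \<and> (st_i \<longrightarrow> st_ii)
         \<and> ((linear f \<and> (\<forall>t\<in>T. linear (g t))) \<longrightarrow>
              (st_i \<longleftrightarrow> st_ii) \<and> (st_ii \<longleftrightarrow> st_iii) \<and> (st_iii \<longleftrightarrow> st_iv))"
proof -
  have continuous_g: "continuous_on T (\<lambda>t. g t x)" for x
    by (rule continuous_on_compose2[OF g_cont, of T "\<lambda>t. (t, x)", simplified])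
      (auto intro: continuous_intros)
  interpret convex_sip T f g cbar bbar xbar
    using T(1) continuous_g bbar_cont xbar slater f_cvx g_cvx by unfold_locales auto
  have st_iv_eq: "st_iv \<longleftrightarrow> local_error_bound fbar q xbar"
    unfolding st_iv_def local_error_bound_def ..
  have iii_iv: "st_iii \<longleftrightarrow> st_iv"
    unfolding st_iv_eq st_iii_def Lpar_def fbar_def
    using levelset_calm_imp_local_error_bound local_error_bound_imp_levelset_calm q(1) by blast
  have iv_i: "st_iv \<longrightarrow> st_i"
    unfolding st_iv_eq st_i_def Par_def fbar_def
    using local_error_bound_imp_optset_calm q(1) by blast
  have i_ii: "st_i \<longrightarrow> st_ii"
    unfolding st_i_def st_ii_def Par_def Cset_def
    using optset_calm_imp_rhs_calm q(1) by blast
  have ii_iii: "st_ii \<longrightarrow> st_iii" if "linear f" "\<forall>t\<in>T. linear (g t)"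
  proof -
    interpret linear_sip T f g cbar bbar xbar
      using that by unfold_locales (auto simp: linear_add linear_scale)
    show ?thesis
      unfolding st_ii_def st_iii_def Cset_def Lpar_def
      using rhs_calm_imp_levelset_calm q(1) by blast
  qed
  show ?thesis
    using iii_iv iv_i i_ii ii_iii by blast
qed

end
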